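(* Let $0<\alpha<d$, $\mathcal{B}_\alpha\in\{\mathcal{B}^c_\alpha,\mathcal{B}^u_\alpha\}$ and $f\in L^1_{\mathrm{loc}}(\mathbb{R}^d)$. Then for each $B\in\mathcal{B}_\alpha$ and each cube $P\supset Q_B$ we have $\ell(P)^\alpha f_P\leq C\,\ell(Q_B)^\alpha f_{Q_B}$, with $C$ depending only on $d$ and $\alpha$.
   Context: $f_B=\frac1{|B|}\int_B|f|$ for a ball or cube $B$; $r(B)$ is the radius of a ball, $\ell(Q)$ the sidelength of a cube, $\overline B$ the closure. Fix $3^d$ (translated) dyadic grids $\mathcal{D}_1,\dots,\mathcal{D}_{3^d}$ such that every ball $B$ is contained in some cube of $\mathcal{D}=\mathcal{D}_1\cup\dots\cup\mathcal{D}_{3^d}$ of sidelength at most $C_d\,r(B)$; for each ball $B$ let $Q_B$ be such a cube. $\mathrm{M}^c_\alpha f(x)=\sup_{r>0}r^\alpha f_{B(x,r)}$, $\mathrm{M}^u_\alpha f(x)=\sup_{B\ni x}r(B)^\alpha f_B$. $\mathcal{B}^c_\alpha(x)=\{B(x,r)\}$ with $r$ the largest radius with $\mathrm{M}^c_\alpha f(x)=r^\alpha f_{B(x,r)}$; $\mathcal{B}^u_\alpha(x)$ is the set of balls $B$ with $x\in\overline B$, $r(B)^\alpha f_B=\mathrm{M}^u_\alpha f(x)$ and $r(A)^\alpha f_A<\mathrm{M}^u_\alpha f(x)$ for all balls $A\supsetneq B$. $\mathcal{B}^c_\alpha=\bigcup_x\mathcal{B}^c_\alpha(x)$, $\mathcal{B}^u_\alpha=\bigcup_x\mathcal{B}^u_\alpha(x)$.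 *)

theory Defs
  imports "HOL-Analysis.Analysis"
begin

definition avg :: "('a::euclidean_space \<Rightarrow> real) \<Rightarrow> 'a set \<Rightarrow> real" where
  "avg f S = (LINT x:S|lebesgue. \<bar>f x\<bar>) / measure lebesgue S"

definition locally_integrable :: "('a::euclidean_space \<Rightarrow> real) \<Rightarrow> bool" where
  "locally_integrable f \<longleftrightarrow> (\<forall>K. compact K \<longrightarrow> set_integrable lebesgue K f)"

definition cube :: "'a::euclidean_space \<Rightarrow> real \<Rightarrow> 'a set" where
  "cube a l = cbox a (a + l *\<^sub>R One)"

definition Mc :: "real \<Rightarrow> ('a::euclidean_space \<Rightarrow> real) \<Rightarrow> 'a \<Rightarrow> ereal" where
  "Mc \<alpha> f x = (SUP r\<in>{0<..}. ereal (r powr \<alpha> * avg f (ball x r)))"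

definition Mu :: "real \<Rightarrow> ('a::euclidean_space \<Rightarrow> real) \<Rightarrow> 'a \<Rightarrow> ereal" where
  "Mu \<alpha> f x = (SUP (c, r)\<in>{(c, r). 0 < r \<and> x \<in> ball c r}. ereal (r powr \<alpha> * avg f (ball c r)))"

text \<open>Balls represented by (center, radius). B^c_alpha(x): the ball B(x,r) with r the largest
  radius attaining the supremum.\<close>
definition Bc_at :: "real \<Rightarrow> ('a::euclidean_space \<Rightarrow> real) \<Rightarrow> 'a \<Rightarrow> ('a \<times> real) set" where
  "Bc_at \<alpha> f x = {(x, r) | r. 0 < r \<and> ereal (r powr \<alpha> * avg f (ball x r)) = Mc \<alpha> f x
       \<and> (\<forall>s>r. ereal (s powr \<alpha> * avg f (ball x s)) \<noteq> Mc \<alpha> f x)}"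

definition Bu_at :: "real \<Rightarrow> ('a::euclidean_space \<Rightarrow> real) \<Rightarrow> 'a \<Rightarrow> ('a \<times> real) set" where
  "Bu_at \<alpha> f x = {(c, r) | c r. 0 < r \<and> x \<in> closure (ball c r)
       \<and> ereal (r powr \<alpha> * avg f (ball c r)) = Mu \<alpha> f x
       \<and> (\<forall>c' r'. 0 < r' \<and> ball c r \<subset> ball c' r' \<longrightarrow>
             ereal (r' powr \<alpha> * avg f (ball c' r')) < Mu \<alpha> f x)}"

definition Bc :: "real \<Rightarrow> ('a::euclidean_space \<Rightarrow> real) \<Rightarrow> ('a \<times> real) set" where
  "Bc \<alpha> f = (\<Union>x. Bc_at \<alpha> f x)"

definition Bu :: "real \<Rightarrow> ('a::euclidean_space \<Rightarrow> real) \<Rightarrow> ('a \<times> real) set" where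
  "Bu \<alpha> f = (\<Union>x. Bu_at \<alpha> f x)"

end

theory Submission
  imports Defs
begin

text \<open>Every ball \<open>B(c, r)\<close> of either family is maximal: \<open>s\<^sup>\<alpha> f\<^sub>B\<^sub>(\<^sub>c\<^sub>,\<^sub>s\<^sub>) \<le> r\<^sup>\<alpha> f\<^sub>B\<^sub>(\<^sub>c\<^sub>,\<^sub>r\<^sub>)\<close> for all
  \<open>s > r\<close>. A cube \<open>P \<supseteq> Q\<^sub>B\<close> of side \<open>m\<close> lies in \<open>B(c, (n + 1) m)\<close>, \<open>n\<close> the dimension. Going from \<open>P\<close>
  up to this ball, down to \<open>B\<close> by maximality and up again to \<open>Q\<^sub>B\<close>, each passage to a larger set
  costs at most the ratio of the volumes, and these ratios multiply to
  \<open>((n + 1) \<ell>(Q\<^sub>B) / r)\<^sup>n \<le> ((n + 1) K)\<^sup>n\<close>.\<close>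

lemma inner_One_Basis [simp]: "i \<in> Basis \<Longrightarrow> (One::'a::euclidean_space) \<bullet> i = 1"
  by (simp add: inner_sum_left inner_Basis sum.delta' cong: sum.cong)

lemma mem_cube_iff: "x \<in> cube a l \<longleftrightarrow> (\<forall>i\<in>Basis. a \<bullet> i \<le> x \<bullet> i \<and> x \<bullet> i \<le> a \<bullet> i + l)"
  by (simp add: cube_def mem_box inner_add_left)

lemma measure_cube:
  assumes "0 \<le> l"
  shows "measure lebesgue (cube (a::'a::euclidean_space) l) = l ^ DIM('a)"
proof -
  have "cbox a (a + l *\<^sub>R One) \<noteq> {}"
    using assms by (simp add: box_ne_empty inner_add_left)
  then show ?thesis
    by (simp add: cube_def content_cbox' inner_add_left)
qed

lemma sets_lebesgue_cube [simp]: "cube a l \<in> sets lebesgue"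
  by (simp add: cube_def)

lemma bounded_cube [simp]: "bounded (cube a l)"
  by (simp add: cube_def)

lemma ball_subset_cube_imp_diameter_le:
  fixes c :: "'a::euclidean_space"
  assumes "0 < r" "ball c r \<subseteq> cube a l"
  shows "2 * r \<le> l"
proof (rule field_le_epsilon)
  fix e :: real
  assume "0 < e"
  obtain i :: 'a where i: "i \<in> Basis"
    using nonempty_Basis by blast
  define t where "t = max 0 (r - e / 2)"
  have "c + t *\<^sub>R i \<in> cube a l" "c - t *\<^sub>R i \<in> cube a l"
    using assms \<open>0 < e\<close> i by (auto simp: t_def dist_norm)
  then have "c \<bullet> i + t \<le> a \<bullet> i + l" "a \<bullet> i \<le> c \<bullet> i - t"
    using i by (auto simp: mem_cube_iff inner_add_left inner_diff_left)
  then show "2 * r \<le> l + e"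
    unfolding t_def by linarith
qed

lemma cube_subset_cube_imp_side_le:
  fixes a :: "'a::euclidean_space"
  assumes "0 \<le> l" "cube a l \<subseteq> cube b m"
  shows "l \<le> m"
proof -
  obtain i :: 'a where i: "i \<in> Basis"
    using nonempty_Basis by blast
  have "a \<in> cube a l" "a + l *\<^sub>R One \<in> cube a l"
    using assms(1) by (auto simp: mem_cube_iff inner_add_left)
  with assms(2) have "a \<in> cube b m" "a + l *\<^sub>R One \<in> cube b m"
    by auto
  then have "b \<bullet> i \<le> a \<bullet> i" "a \<bullet> i + l \<le> b \<bullet> i + m"
    using i by (auto simp: mem_cube_iff inner_add_left)
  then show ?thesis
    by linarith
qed

lemma cube_subset_ball_around_point:
  fixes c :: "'a::euclidean_space"
  assumes "c \<in> cube b m" "0 < m"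
  shows "cube b m \<subseteq> ball c ((real DIM('a) + 1) * m)"
proof
  fix y
  assume y: "y \<in> cube b m"
  have "\<bar>(y - c) \<bullet> i\<bar> \<le> m" if "i \<in> Basis" for i
  proof -
    have "b \<bullet> i \<le> c \<bullet> i" "c \<bullet> i \<le> b \<bullet> i + m" "b \<bullet> i \<le> y \<bullet> i" "y \<bullet> i \<le> b \<bullet> i + m"
      using assms(1) y that unfolding mem_cube_iff by blast+
    then show ?thesis
      by (simp add: inner_diff_left abs_le_iff)
  qed
  then have "(\<Sum>i\<in>Basis. \<bar>(y - c) \<bullet> i\<bar>) \<le> real DIM('a) * m"
    using sum_mono[of Basis "\<lambda>i. \<bar>(y - c) \<bullet> i\<bar>" "\<lambda>_. m"] by simp
  with norm_le_l1[of "y - c"] have "norm (y - c) \<le> real DIM('a) * m"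
    by linarith
  with \<open>0 < m\<close> show "y \<in> ball c ((real DIM('a) + 1) * m)"
    by (simp add: dist_norm norm_minus_commute algebra_simps)
qed

lemma avg_nonneg: "0 \<le> avg f S"
  unfolding avg_def set_lebesgue_integral_def by (auto intro!: integral_nonneg_AE divide_nonneg_nonneg)

lemma set_integral_abs_subset_le:
  fixes f :: "'a::euclidean_space \<Rightarrow> real"
  assumes "locally_integrable f" "A \<subseteq> B" "A \<in> sets lebesgue" "B \<in> sets lebesgue" "bounded B"
  shows "(LINT x:A|lebesgue. \<bar>f x\<bar>) \<le> (LINT x:B|lebesgue. \<bar>f x\<bar>)"
proof -
  have "set_integrable lebesgue (closure B) f"
    using assms(1,5) by (simp add: locally_integrable_def compact_closure)
  then have intB: "set_integrable lebesgue B f"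
    using assms(4) closure_subset by (rule set_integrable_subset)
  then have intA: "set_integrable lebesgue A f"
    using assms(3,2) by (rule set_integrable_subset)
  have "(\<integral>x. indicator A x * \<bar>f x\<bar> \<partial>lebesgue) \<le> (\<integral>x. indicator B x * \<bar>f x\<bar> \<partial>lebesgue)"
    using set_integrable_abs[OF intA] set_integrable_abs[OF intB] assms(2)
    by (intro integral_mono) (auto simp: set_integrable_def indicator_def)
  then show ?thesis
    by (simp add: set_lebesgue_integral_def)
qed

lemma avg_le_measure_ratio_mult_avg:
  fixes f :: "'a::euclidean_space \<Rightarrow> real"
  assumes "locally_integrable f" "A \<subseteq> B" "A \<in> sets lebesgue" "B \<in> sets lebesgue" "bounded B"
    and "0 < measure lebesgue A"
  shows "avg f A \<le> measure lebesgue B / measure lebesgue A * avg f B"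
proof -
  have "measure lebesgue A \<le> measure lebesgue B"
    using assms(2-5) by (intro measure_mono_fmeasurable bounded_set_imp_lmeasurable)
  with assms(6) have B: "0 < measure lebesgue B"
    by linarith
  then have "measure lebesgue B * avg f B = (LINT x:B|lebesgue. \<bar>f x\<bar>)"
    by (simp add: avg_def)
  moreover have "(LINT x:A|lebesgue. \<bar>f x\<bar>) \<le> (LINT x:B|lebesgue. \<bar>f x\<bar>)"
    using assms(1-5) by (rule set_integral_abs_subset_le)
  ultimately show ?thesis
    using assms(6) B by (simp add: avg_def divide_right_mono)
qed

lemma Bc_memD:
  assumes "(c, r) \<in> Bc \<alpha> f"
  shows "0 < r" and "r < s \<Longrightarrow> s powr \<alpha> * avg f (ball c s) \<le> r powr \<alpha> * avg f (ball c r)"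
proof -
  from assms obtain x where "(c, r) \<in> Bc_at \<alpha> f x"
    unfolding Bc_def by blast
  then have r: "0 < r" and max: "ereal (r powr \<alpha> * avg f (ball c r)) = Mc \<alpha> f c"
    unfolding Bc_at_def by auto
  show "0 < r"
    by (fact r)
  assume "r < s"
  with r have "ereal (s powr \<alpha> * avg f (ball c s)) \<le> Mc \<alpha> f c"
    unfolding Mc_def by (intro SUP_upper) auto
  with max[symmetric] show "s powr \<alpha> * avg f (ball c s) \<le> r powr \<alpha> * avg f (ball c r)"
    by simp
qed

lemma Bu_memD:
  assumes "(c, r) \<in> Bu \<alpha> f"
  shows "0 < r" and "r < s \<Longrightarrow> s powr \<alpha> * avg f (ball c s) \<le> r powr \<alpha> * avg f (ball c r)"
proof -
  from assms obtain x where "(c, r) \<in> Bu_at \<alpha> f x"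
    unfolding Bu_def by blast
  then have r: "0 < r" and x: "x \<in> closure (ball c r)"
    and max: "ereal (r powr \<alpha> * avg f (ball c r)) = Mu \<alpha> f x"
    unfolding Bu_at_def by auto
  show "0 < r"
    by (fact r)
  assume "r < s"
  with r x have "(c, s) \<in> {(c, r). 0 < r \<and> x \<in> ball c r}"
    by (simp add: dist_commute)
  then have "(\<lambda>(c, r). ereal (r powr \<alpha> * avg f (ball c r))) (c, s) \<le> Mu \<alpha> f x"
    unfolding Mu_def by (rule SUP_upper)
  with max[symmetric] show "s powr \<alpha> * avg f (ball c s) \<le> r powr \<alpha> * avg f (ball c r)"
    by simp
qed

lemma ball_cube_volume_ratio:
  fixes a b c :: "'a::euclidean_space"
  assumes "0 < r" "0 < s" "0 < m" "0 < l"
  shows "measure lebesgue (ball c s) / measure lebesgue (cube b m)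
           * (measure lebesgue (cube a l) / measure lebesgue (ball c r))
         = (s * l / (m * r)) ^ DIM('a)"
proof -
  define w where "w = measure lebesgue (ball (0::'a) 1)"
  have "0 < w"
    unfolding w_def using content_ball_pos[of 1 "0::'a"] by simp
  have ball_volume: "measure lebesgue (ball c t) = t ^ DIM('a) * w" if "0 < t" for t
    using content_ball_conv_unit_ball[of t c] that by (simp add: w_def)
  show ?thesis
    unfolding ball_volume[OF \<open>0 < r\<close>] ball_volume[OF \<open>0 < s\<close>]
      measure_cube[OF less_imp_le[OF \<open>0 < m\<close>]] measure_cube[OF less_imp_le[OF \<open>0 < l\<close>]]
    using \<open>0 < w\<close> by (simp add: power_mult_distrib power_divide)
qed

lemma avg_le_via_maximal_ball:
  fixes f :: "'a::euclidean_space \<Rightarrow> real"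
  assumes f: "locally_integrable f" and "0 \<le> \<alpha>" and "0 < r" and "r < s"
    and maximal: "s powr \<alpha> * avg f (ball c s) \<le> r powr \<alpha> * avg f (ball c r)"
    and PB: "P \<subseteq> ball c s" "P \<in> sets lebesgue" "0 < measure lebesgue P"
    and BQ: "ball c r \<subseteq> Q" "Q \<in> sets lebesgue" "bounded Q"
    and "0 \<le> t" "t \<le> s" "r \<le> u"
  shows "t powr \<alpha> * avg f P
           \<le> measure lebesgue (ball c s) / measure lebesgue P
             * (measure lebesgue Q / measure lebesgue (ball c r)) * (u powr \<alpha> * avg f Q)"
proof -
  define \<rho> where "\<rho> = measure lebesgue (ball c s) / measure lebesgue P"
  define \<sigma> where "\<sigma> = measure lebesgue Q / measure lebesgue (ball c r)"
  have "0 \<le> \<rho>" "0 \<le> \<sigma>"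
    by (simp_all add: \<rho>_def \<sigma>_def)
  have avgP: "avg f P \<le> \<rho> * avg f (ball c s)"
    unfolding \<rho>_def using f PB by (intro avg_le_measure_ratio_mult_avg) auto
  have avgB: "avg f (ball c r) \<le> \<sigma> * avg f Q"
    unfolding \<sigma>_def using f BQ \<open>0 < r\<close> by (intro avg_le_measure_ratio_mult_avg) auto
  have "t powr \<alpha> * avg f P \<le> t powr \<alpha> * (\<rho> * avg f (ball c s))"
    using avgP by (simp add: mult_left_mono)
  also have "\<dots> = \<rho> * (t powr \<alpha> * avg f (ball c s))"
    by (simp add: ac_simps)
  also have "\<dots> \<le> \<rho> * (s powr \<alpha> * avg f (ball c s))"
    using \<open>0 \<le> \<rho>\<close> \<open>0 \<le> t\<close> \<open>t \<le> s\<close> \<open>0 \<le> \<alpha>\<close>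
    by (intro mult_left_mono mult_right_mono powr_mono2 avg_nonneg) auto
  also have "\<dots> \<le> \<rho> * (r powr \<alpha> * avg f (ball c r))"
    using maximal \<open>0 \<le> \<rho>\<close> by (rule mult_left_mono)
  also have "\<dots> \<le> \<rho> * (r powr \<alpha> * (\<sigma> * avg f Q))"
    using \<open>0 \<le> \<rho>\<close> avgB by (simp add: mult_left_mono)
  also have "\<dots> = \<rho> * \<sigma> * (r powr \<alpha> * avg f Q)"
    by (simp add: ac_simps)
  also have "\<dots> \<le> \<rho> * \<sigma> * (u powr \<alpha> * avg f Q)"
    using \<open>0 \<le> \<rho>\<close> \<open>0 \<le> \<sigma>\<close> \<open>0 < r\<close> \<open>r \<le> u\<close> \<open>0 \<le> \<alpha>\<close>
    by (intro mult_left_mono mult_right_mono powr_mono2 avg_nonneg) auto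
  finally show ?thesis
    unfolding \<rho>_def \<sigma>_def .
qed

lemma cube_avg_le_if_ball_maximal:
  fixes f :: "'a::euclidean_space \<Rightarrow> real"
  assumes f: "locally_integrable f" and "0 \<le> \<alpha>" and "0 < r"
    and maximal: "\<And>s. r < s \<Longrightarrow> s powr \<alpha> * avg f (ball c s) \<le> r powr \<alpha> * avg f (ball c r)"
    and BQ: "ball c r \<subseteq> cube a l" and "l \<le> K * r" and QP: "cube a l \<subseteq> cube b m"
  shows "m powr \<alpha> * avg f (cube b m)
           \<le> ((real DIM('a) + 1) * K) ^ DIM('a) * (l powr \<alpha> * avg f (cube a l))"
proof -
  define n where "n = DIM('a)"
  define k where "k = real n + 1"
  define s where "s = k * m"
  have "2 * r \<le> l"
    using \<open>0 < r\<close> BQ by (rule ball_subset_cube_imp_diameter_le)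
  then have "0 < l" "r \<le> l"
    using \<open>0 < r\<close> by auto
  have "l \<le> m"
    using \<open>0 < l\<close> QP by (rule cube_subset_cube_imp_side_le[OF less_imp_le])
  have "c \<in> cube b m"
    using \<open>0 < r\<close> BQ QP centre_in_ball by blast
  then have PB: "cube b m \<subseteq> ball c s"
    using \<open>0 < l\<close> \<open>l \<le> m\<close> unfolding s_def k_def n_def by (intro cube_subset_ball_around_point) auto
  have "0 < m" "m \<le> s"
    using \<open>0 < l\<close> \<open>l \<le> m\<close> by (simp_all add: s_def k_def)
  then have "r < s" "0 < s"
    using \<open>0 < r\<close> \<open>2 * r \<le> l\<close> \<open>l \<le> m\<close> by linarith+
  have "measure lebesgue (ball c s) / measure lebesgue (cube b m)
          * (measure lebesgue (cube a l) / measure lebesgue (ball c r))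
        = (s * l / (m * r)) ^ n" (is "?ratio = _")
    unfolding n_def using \<open>0 < r\<close> \<open>0 < s\<close> \<open>0 < m\<close> \<open>0 < l\<close> by (rule ball_cube_volume_ratio)
  also have "\<dots> = (k * (l / r)) ^ n"
    using \<open>0 < m\<close> by (simp add: s_def)
  also have "\<dots> \<le> (k * K) ^ n"
    using \<open>0 < r\<close> \<open>0 < l\<close> \<open>l \<le> K * r\<close>
    by (intro power_mono mult_left_mono) (auto simp: k_def pos_divide_le_eq)
  finally have volume_ratio: "?ratio \<le> (k * K) ^ n" .
  have "m powr \<alpha> * avg f (cube b m) \<le> ?ratio * (l powr \<alpha> * avg f (cube a l))"
    using f \<open>0 \<le> \<alpha>\<close> \<open>0 < r\<close> \<open>r < s\<close> maximal[OF \<open>r < s\<close>] PB _ _ BQ _ _ less_imp_le[OF \<open>0 < m\<close>] \<open>m \<le> s\<close> \<open>r \<le> l\<close>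
    by (rule avg_le_via_maximal_ball) (simp_all add: measure_cube less_imp_le[OF \<open>0 < m\<close>] \<open>0 < m\<close>)
  also have "\<dots> \<le> (k * K) ^ n * (l powr \<alpha> * avg f (cube a l))"
    by (rule mult_right_mono[OF volume_ratio]) (simp add: avg_nonneg)
  finally show ?thesis
    by (simp add: k_def n_def)
qed

theorem lemma4p3:
  fixes \<alpha> :: real and K :: real
  assumes "0 < \<alpha>" and "\<alpha> < real DIM('a::euclidean_space)" and "0 < K"
  shows "\<exists>C>0. \<forall>(f :: 'a \<Rightarrow> real) \<B> c r a l b m.
           locally_integrable f \<longrightarrow> \<B> \<in> {Bc \<alpha> f, Bu \<alpha> f} \<longrightarrow> (c, r) \<in> \<B> \<longrightarrow>
           0 < l \<longrightarrow> ball c r \<subseteq> cube a l \<longrightarrow> l \<le> K * r \<longrightarrow>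
           0 < m \<longrightarrow> cube a l \<subseteq> cube b m \<longrightarrow>
           m powr \<alpha> * avg f (cube b m) \<le> C * (l powr \<alpha> * avg f (cube a l))"
proof (intro exI conjI allI impI)
  show "0 < ((real DIM('a) + 1) * K) ^ DIM('a)"
    using \<open>0 < K\<close> by simp
  fix f :: "'a \<Rightarrow> real" and \<B> c r a l b m
  assume f: "locally_integrable f" and "\<B> \<in> {Bc \<alpha> f, Bu \<alpha> f}" "(c, r) \<in> \<B>"
    and BQ: "ball c r \<subseteq> cube a l" and "l \<le> K * r" and QP: "cube a l \<subseteq> cube b m"
  then have "0 < r"
    and maximal: "\<And>s. r < s \<Longrightarrow> s powr \<alpha> * avg f (ball c s) \<le> r powr \<alpha> * avg f (ball c r)"
    using Bc_memD[of c r \<alpha> f] Bu_memD[of c r \<alpha> f] by auto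
  show "m powr \<alpha> * avg f (cube b m)
      \<le> ((real DIM('a) + 1) * K) ^ DIM('a) * (l powr \<alpha> * avg f (cube a l))"
    using f less_imp_le[OF \<open>0 < \<alpha>\<close>] \<open>0 < r\<close> maximal BQ \<open>l \<le> K * r\<close> QP by (rule cube_avg_le_if_ball_maximal)
qed

end
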